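(* Let $0<\beta<1$, $\bar{x}\in\mathcal{X}$, and $z=F_{\bar{x}}^{-1}(\beta)$. Suppose that $x\mapsto f(x,Y)$ is continuous at $\bar{x}$ with probability 1, that $F_{\bar{x}}$ is continuous at $z$, and that $F_{\bar{x}}$ is strictly increasing at $F_{\bar{x}}^{-1}(\beta)$ in the sense that for all $\epsilon>0$, $$F_{\bar{x}}\big(F_{\bar{x}}^{-1}(\beta)-\epsilon\big)<\beta<F_{\bar{x}}\big(F_{\bar{x}}^{-1}(\beta)+\epsilon\big).$$ Then $x\mapsto F_x^{-1}(\beta)$ is continuous at $\bar{x}$.
   Context: $Y$ is a random vector in $\mathbb{R}^d$, $\mathcal{X}\subset\mathbb{R}^k$, $f:\mathcal{X}\times\mathbb{R}^d\to\mathbb{R}$ with $f(x,Y)$ measurable for all $x$, $F_x(z)=\mathbb{P}(f(x,Y)\le z)$ and $F_x^{-1}(\beta)=\inf\{z\in\mathbb{R}: F_x(z)\ge\beta\}$. *)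

theory Defs
  imports "HOL-Probability.Probability"
begin

definition cdfF :: "'a measure \<Rightarrow> ('k \<Rightarrow> 'd \<Rightarrow> real) \<Rightarrow> ('a \<Rightarrow> 'd) \<Rightarrow> 'k \<Rightarrow> real \<Rightarrow> real" where
  "cdfF M f Y x z = measure M {\<omega> \<in> space M. f x (Y \<omega>) \<le> z}"

definition quantF :: "'a measure \<Rightarrow> ('k \<Rightarrow> 'd \<Rightarrow> real) \<Rightarrow> ('a \<Rightarrow> 'd) \<Rightarrow> 'k \<Rightarrow> real \<Rightarrow> real" where
  "quantF M f Y x \<beta> = Inf {z. cdfF M f Y x z \<ge> \<beta>}"

end

theory Submission
  imports Defs
begin

text \<open>If \<open>f(x\<^sub>n, Y) \<rightarrow> f(x\<^sub>0, Y)\<close> almost surely, then it converges in probability, so off an event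
  of small probability the two random variables differ by at most \<open>\<delta>\<close>.  This shifts the
  distribution functions against each other: \<open>F\<^sub>0(q - \<delta>) - \<epsilon> \<le> F\<^sub>n(q - 2\<delta>)\<close> and
  \<open>F\<^sub>n(q + 2\<delta>) \<ge> F\<^sub>0(q + \<delta>) - \<epsilon>\<close> fail only by that small probability.  The strict increase
  of \<open>F\<^sub>0\<close> at its \<open>\<beta>\<close>-quantile \<open>q\<close> puts \<open>\<beta>\<close> strictly between \<open>F\<^sub>0(q - \<delta>)\<close> and \<open>F\<^sub>0(q + \<delta>)\<close>,
  hence eventually between \<open>F\<^sub>n(q - 2\<delta>)\<close> and \<open>F\<^sub>n(q + 2\<delta>)\<close>, which traps the \<open>\<beta>\<close>-quantile of
  \<open>F\<^sub>n\<close> in \<open>[q - 2\<delta>, q + 2\<delta>]\<close>.\<close>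

lemma (in finite_measure) measure_dist_gt_tendsto_zero:
  fixes g :: "nat \<Rightarrow> 'a \<Rightarrow> real"
  assumes g: "\<And>n. g n \<in> borel_measurable M" and h: "h \<in> borel_measurable M"
    and lim: "AE \<omega> in M. (\<lambda>n. g n \<omega>) \<longlonglongrightarrow> h \<omega>" and "0 < \<delta>"
  shows "(\<lambda>n. measure M {\<omega>\<in>space M. \<delta> < \<bar>g n \<omega> - h \<omega>\<bar>}) \<longlonglongrightarrow> 0"
proof -
  define A where "A n = {\<omega>\<in>space M. \<delta> < \<bar>g n \<omega> - h \<omega>\<bar>}" for n
  have A_sets: "A n \<in> sets M" for n
    unfolding A_def using g h by measurable
  have "(\<lambda>n. integral\<^sup>L M (indicator (A n) :: 'a \<Rightarrow> real)) \<longlonglongrightarrow> integral\<^sup>L M (\<lambda>_. 0::real)"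
  proof (rule integral_dominated_convergence[where w="\<lambda>_. 1"])
    show "AE \<omega> in M. (\<lambda>n. indicator (A n) \<omega> :: real) \<longlonglongrightarrow> 0"
      using lim
    proof eventually_elim
      case (elim \<omega>)
      then have "\<forall>\<^sub>F n in sequentially. dist (g n \<omega>) (h \<omega>) < \<delta>"
        using \<open>0 < \<delta>\<close> tendstoD by blast
      then have "\<forall>\<^sub>F n in sequentially. indicator (A n) \<omega> = (0::real)"
        by eventually_elim (auto simp: A_def dist_real_def indicator_def)
      then show ?case
        by (rule tendsto_eventually)
    qed
  qed (use A_sets in \<open>auto simp: indicator_def\<close>)
  then show ?thesis
    using A_sets by (simp add: A_def[symmetric])
qed

lemma (in finite_measure) measure_le_le_shift:
  fixes g h :: "'a \<Rightarrow> real"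
  assumes "g \<in> borel_measurable M" "h \<in> borel_measurable M"
  shows "measure M {\<omega>\<in>space M. g \<omega> \<le> z}
    \<le> measure M {\<omega>\<in>space M. h \<omega> \<le> z + \<delta>} + measure M {\<omega>\<in>space M. \<delta> < \<bar>g \<omega> - h \<omega>\<bar>}"
proof -
  have "measure M {\<omega>\<in>space M. g \<omega> \<le> z}
      \<le> measure M ({\<omega>\<in>space M. h \<omega> \<le> z + \<delta>} \<union> {\<omega>\<in>space M. \<delta> < \<bar>g \<omega> - h \<omega>\<bar>})"
    using assms by (intro finite_measure_mono) auto
  also have "\<dots> \<le> measure M {\<omega>\<in>space M. h \<omega> \<le> z + \<delta>} + measure M {\<omega>\<in>space M. \<delta> < \<bar>g \<omega> - h \<omega>\<bar>}"
    using assms by (intro measure_Un_le) auto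
  finally show ?thesis .
qed

lemma cInf_superlevel_between:
  fixes G :: "real \<Rightarrow> real"
  assumes "mono G" "G a < \<beta>" "\<beta> \<le> G b"
  shows "a \<le> Inf {z. \<beta> \<le> G z} \<and> Inf {z. \<beta> \<le> G z} \<le> b"
proof -
  have above_a: "a < z" if "\<beta> \<le> G z" for z
    using that assms(1,2) monoD[OF assms(1), of z a] by fastforce
  have "Inf {z. \<beta> \<le> G z} \<le> b"
    using assms(3) above_a by (intro cInf_lower) (auto simp: bdd_below_def intro: less_imp_le)
  moreover have "a \<le> Inf {z. \<beta> \<le> G z}"
    using assms(3) above_a by (intro cInf_greatest) (auto intro: less_imp_le)
  ultimately show ?thesis by blast
qed

lemma (in prob_space) quantile_tendsto_of_AE_tendsto:
  fixes g :: "nat \<Rightarrow> 'a \<Rightarrow> real" and h :: "'a \<Rightarrow> real" and \<beta> :: real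
  defines "F n z \<equiv> measure M {\<omega>\<in>space M. g n \<omega> \<le> z}"
    and "F\<^sub>0 z \<equiv> measure M {\<omega>\<in>space M. h \<omega> \<le> z}"
    and "q \<equiv> Inf {z. \<beta> \<le> measure M {\<omega>\<in>space M. h \<omega> \<le> z}}"
  assumes g: "\<And>n. g n \<in> borel_measurable M" and h: "h \<in> borel_measurable M"
    and lim: "AE \<omega> in M. (\<lambda>n. g n \<omega>) \<longlonglongrightarrow> h \<omega>"
    and strict: "\<And>\<epsilon>. 0 < \<epsilon> \<Longrightarrow> F\<^sub>0 (q - \<epsilon>) < \<beta> \<and> \<beta> < F\<^sub>0 (q + \<epsilon>)"
  shows "(\<lambda>n. Inf {z. \<beta> \<le> F n z}) \<longlonglongrightarrow> q"
proof (rule tendstoI)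
  fix r :: real assume "0 < r"
  define \<delta> where "\<delta> = r / 4"
  have "0 < \<delta>" using \<open>0 < r\<close> by (simp add: \<delta>_def)
  define P where "P n = measure M {\<omega>\<in>space M. \<delta> < \<bar>g n \<omega> - h \<omega>\<bar>}" for n
  define c where "c = min (\<beta> - F\<^sub>0 (q - \<delta>)) (F\<^sub>0 (q + \<delta>) - \<beta>)"
  have "0 < c" using strict[OF \<open>0 < \<delta>\<close>] by (simp add: c_def)
  have "P \<longlonglongrightarrow> 0"
    unfolding P_def using measure_dist_gt_tendsto_zero[OF g h lim \<open>0 < \<delta>\<close>] .
  then have "\<forall>\<^sub>F n in sequentially. P n < c"
    using \<open>0 < c\<close> by (rule order_tendstoD(2))
  then show "\<forall>\<^sub>F n in sequentially. dist (Inf {z. \<beta> \<le> F n z}) q < r"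
  proof eventually_elim
    case (elim n)
    have "mono (F n)"
      unfolding F_def using g by (intro monoI finite_measure_mono) auto
    moreover have "F n (q - 2 * \<delta>) < \<beta>"
      using measure_le_le_shift[OF g[of n] h, where z="q - 2 * \<delta>" and \<delta>=\<delta>] elim
      by (simp add: F_def F\<^sub>0_def P_def c_def)
    moreover have "\<beta> \<le> F n (q + 2 * \<delta>)"
      using measure_le_le_shift[OF h g[of n], where z="q + \<delta>" and \<delta>=\<delta>] elim
      by (simp add: F_def F\<^sub>0_def P_def c_def abs_minus_commute add.commute)
    ultimately have "\<bar>Inf {z. \<beta> \<le> F n z} - q\<bar> \<le> 2 * \<delta>"
      using cInf_superlevel_between[of "F n"] by fastforce
    then show ?case
      using \<open>0 < r\<close> by (simp add: dist_real_def \<delta>_def)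
  qed
qed

theorem mainTheorem13:
  fixes M :: "'a measure"
    and Y :: "'a \<Rightarrow> real ^ 'd"
    and f :: "real ^ 'k \<Rightarrow> real ^ 'd \<Rightarrow> real"
    and X :: "(real ^ 'k) set"
    and xbar :: "real ^ 'k"
    and \<beta> :: real
  assumes "prob_space M"
    and meas: "\<And>x. x \<in> X \<Longrightarrow> (\<lambda>\<omega>. f x (Y \<omega>)) \<in> borel_measurable M"
    and "0 < \<beta>" and "\<beta> < 1"
    and "xbar \<in> X"
    and contAE: "AE \<omega> in M. continuous (at xbar within X) (\<lambda>x. f x (Y \<omega>))"
    and "isCont (cdfF M f Y xbar) (quantF M f Y xbar \<beta>)"
    and "\<And>\<epsilon>. \<epsilon> > 0 \<Longrightarrow>
           cdfF M f Y xbar (quantF M f Y xbar \<beta> - \<epsilon>) < \<beta> \<and>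
           \<beta> < cdfF M f Y xbar (quantF M f Y xbar \<beta> + \<epsilon>)"
  shows "continuous (at xbar within X) (\<lambda>x. quantF M f Y x \<beta>)"
  unfolding continuous_within_sequentially
proof (intro allI impI)
  interpret prob_space M by fact
  fix xs assume xs: "(\<forall>n. xs n \<in> X) \<and> xs \<longlonglongrightarrow> xbar"
  have "AE \<omega> in M. (\<lambda>n. f (xs n) (Y \<omega>)) \<longlonglongrightarrow> f xbar (Y \<omega>)"
    using contAE by eventually_elim (use xs in \<open>auto simp: continuous_within_sequentially o_def\<close>)
  from quantile_tendsto_of_AE_tendsto[where g="\<lambda>n \<omega>. f (xs n) (Y \<omega>)", OF _ _ this]
  show "((\<lambda>x. quantF M f Y x \<beta>) \<circ> xs) \<longlonglongrightarrow> quantF M f Y xbar \<beta>"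
    using assms(5,8) meas xs by (simp add: o_def quantF_def cdfF_def)
qed

end
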